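(* Let $\mathcal X$ be finite with $N=|\mathcal X|\ge2$, $c\in(0,1/N]$, $\varepsilon\ge0$, and let $K\in\mathcal M(\varepsilon,c)$. Then for all $P_X,Q_X\in\mathcal Q_{\mathcal X}(c)$ with $\mathrm{TV}(P_X\|Q_X)\le\delta$, $$D(K\circ P_X\|K\circ Q_X)\le\Xi(\varepsilon,c)\,\log\big((1-Nc)e^\varepsilon+1\big)\,\delta,$$ where $\Xi(\varepsilon,c)=\min\left\{\frac{e^\varepsilon-1}{e^\varepsilon(1-Nc)+1},1\right\}$.
   Context: $D(P\|Q)=\sum_y P(y)\log\frac{P(y)}{Q(y)}$ is relative entropy (natural log) and $\mathrm{TV}(P\|Q)=\frac12\sum|P-Q|$. A kernel $K$ is a row-stochastic matrix with entries $K_{Y|X=x}(y)$, $(K\circ P_X)(y)=\sum_xK_{Y|X=x}(y)P_X(x)$. PML: $\ell_{K\times P_X}(X\to y)=\log\frac{\max_x K_{Y|X=x}(y)}{(K\circ P_X)(y)}$ for full-support $P_X$ and $(K\circ P_X)(y)>0$. $\mathcal Q_{\mathcal X}(c)=\{P_X:\min_xP_X(x)\ge c\}$; $C(K,\mathcal P)=\sup_{P_X\in\mathcal P}\sup_{y:(K\circ P_X)(y)>0}\ell_{K\times P_X}(X\to y)$; $\mathcal M(\varepsilon,c)$ is the set of kernels from $\mathcal X$ to a finite output set with $C(K,\mathcal Q_{\mathcal X}(c))\le\varepsilon$. *)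

theory Defs
  imports Complex_Main
begin

definition is_dist :: "'a set \<Rightarrow> ('a \<Rightarrow> real) \<Rightarrow> bool" where
  "is_dist X P \<longleftrightarrow> (\<forall>x\<in>X. P x \<ge> 0) \<and> (\<Sum>x\<in>X. P x) = 1"

definition is_kernel :: "'a set \<Rightarrow> 'b set \<Rightarrow> ('a \<Rightarrow> 'b \<Rightarrow> real) \<Rightarrow> bool" where
  "is_kernel X Y K \<longleftrightarrow> finite Y \<and> (\<forall>x\<in>X. is_dist Y (K x))"

definition push :: "'a set \<Rightarrow> ('a \<Rightarrow> 'b \<Rightarrow> real) \<Rightarrow> ('a \<Rightarrow> real) \<Rightarrow> 'b \<Rightarrow> real" where
  "push X K P y = (\<Sum>x\<in>X. K x y * P x)"

definition pml :: "'a set \<Rightarrow> ('a \<Rightarrow> 'b \<Rightarrow> real) \<Rightarrow> ('a \<Rightarrow> real) \<Rightarrow> 'b \<Rightarrow> real" where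
  "pml X K P y = ln ((MAX x\<in>X. K x y) / push X K P y)"

definition Qset :: "'a set \<Rightarrow> real \<Rightarrow> ('a \<Rightarrow> real) set" where
  "Qset X c = {P. is_dist X P \<and> (\<forall>x\<in>X. P x \<ge> c)}"

text \<open>K in M(eps,c): K is a kernel into finite Y and
  C(K,Q_X(c)) = sup over P in Q_X(c) and y with (K o P)(y) > 0 of the PML is at most eps
  (the supremum condition written out pointwise).\<close>
definition in_M :: "'a set \<Rightarrow> 'b set \<Rightarrow> real \<Rightarrow> real \<Rightarrow> ('a \<Rightarrow> 'b \<Rightarrow> real) \<Rightarrow> bool" where
  "in_M X Y eps c K \<longleftrightarrow> is_kernel X Y K \<and>
     (\<forall>P\<in>Qset X c. \<forall>y\<in>Y. push X K P y > 0 \<longrightarrow> pml X K P y \<le> eps)"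

text \<open>Relative entropy (natural log), with the convention 0 log(0/q) = 0.\<close>
definition KL :: "'b set \<Rightarrow> ('b \<Rightarrow> real) \<Rightarrow> ('b \<Rightarrow> real) \<Rightarrow> real" where
  "KL Y P Q = (\<Sum>y\<in>{y\<in>Y. P y > 0}. P y * ln (P y / Q y))"

definition TV :: "'a set \<Rightarrow> ('a \<Rightarrow> real) \<Rightarrow> ('a \<Rightarrow> real) \<Rightarrow> real" where
  "TV X P Q = (1/2) * (\<Sum>x\<in>X. \<bar>P x - Q x\<bar>)"

definition Xi :: "nat \<Rightarrow> real \<Rightarrow> real \<Rightarrow> real" where
  "Xi N eps c = min ((exp eps - 1) / (exp eps * (1 - real N * c) + 1)) 1"

end

theory Submission
  imports Defs "HOL-Analysis.Analysis"
begin

text \<open>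
  A PML of at most \<open>\<epsilon>\<close> means \<open>K(y|x) \<le> e\<^sup>\<epsilon> (K \<circ> R)(y)\<close> for every \<open>R \<in> Q\<^sub>X(c)\<close>.
  Consequently the output likelihood ratio of \<open>K \<circ> P\<close> and \<open>K \<circ> Q\<close> lies in
  \<open>[1/L, L]\<close> with \<open>L = (1 - Nc) e\<^sup>\<epsilon> + 1\<close>, and chord bounds for the convex functions
  \<open>t ln t\<close> and \<open>- ln t\<close> on \<open>[1, L]\<close> give \<open>D(K \<circ> P \<parallel> K \<circ> Q) \<le> ln L \<cdot> TV(K \<circ> P, K \<circ> Q)\<close>.
  Testing the same inequality against the extreme points \<open>c + (1 - Nc) 1\<^sub>x\<close> of \<open>Q\<^sub>X(c)\<close>
  shows that every event probability \<open>K(E|x)\<close> varies with \<open>x\<close> by at most \<open>\<Xi>(\<epsilon>, c)\<close>;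
  this bounds the Dobrushin coefficient of \<open>K\<close>, so \<open>TV(K \<circ> P, K \<circ> Q) \<le> \<Xi>(\<epsilon>, c) TV(P, Q)\<close>.
\<close>

lemma mult_ln_le_chord:
  fixes r L :: real
  assumes "1 \<le> r" "r \<le> L"
  shows "r * ln r \<le> (r - 1) * (L * ln L / (L - 1))"
proof -
  have "convex_on {0<..} (\<lambda>x::real. x * ln x)"
    by (intro f''_ge0_imp_convex derivative_eq_intros | simp)+
  then have "convex_on {1..L} (\<lambda>x::real. x * ln x)"
    by (rule convex_on_subset) auto
  from convex_onD_Icc'[OF this, of r] show ?thesis
    using assms by (simp add: mult.commute)
qed

lemma ln_ge_chord:
  fixes s L :: real
  assumes "1 \<le> s" "s \<le> L"
  shows "(s - 1) * (ln L / (L - 1)) \<le> ln s"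
proof -
  have "convex_on {1..L} (\<lambda>x::real. - ln x)"
    using ln_concave unfolding concave_on_def by (rule convex_on_subset) auto
  from convex_onD_Icc'[OF this, of s] show ?thesis
    using assms by (simp add: mult.commute)
qed

lemma mult_ln_div_le_pos_parts:
  fixes p q L :: real
  assumes "0 < p" "0 < q" "p \<le> L * q" "q \<le> L * p"
  shows "p * ln (p / q) \<le> (p - q) + (L * ln L / (L - 1) - 1) * max (p - q) 0
            + (1 - ln L / (L - 1)) * max (q - p) 0"
proof (cases "q \<le> p")
  case True
  define Z where "Z = L * ln L / (L - 1)"
  have chord: "p / q * ln (p / q) \<le> (p / q - 1) * Z"
    unfolding Z_def using assms True by (intro mult_ln_le_chord) (auto simp: field_simps)
  have "p * ln (p / q) = q * (p / q * ln (p / q))"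
    using assms by simp
  also have "\<dots> \<le> q * ((p / q - 1) * Z)"
    using assms chord by (intro mult_left_mono) auto
  also have "\<dots> = (p - q) * Z"
    using assms by (simp add: field_simps)
  finally show ?thesis
    using True unfolding Z_def by (simp add: algebra_simps)
next
  case False
  define Z where "Z = ln L / (L - 1)"
  have chord: "(q / p - 1) * Z \<le> ln (q / p)"
    unfolding Z_def using assms False by (intro ln_ge_chord) (auto simp: field_simps)
  have "(q - p) * Z = p * ((q / p - 1) * Z)"
    using assms by (simp add: field_simps)
  also have "\<dots> \<le> p * ln (q / p)"
    using assms chord by (intro mult_left_mono) auto
  also have "\<dots> = - (p * ln (p / q))"
    using assms by (simp add: ln_div algebra_simps)
  finally show ?thesis
    using False unfolding Z_def by (simp add: algebra_simps)
qed

lemma TV_commute: "TV A u v = TV A v u"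
  unfolding TV_def by (simp add: abs_minus_commute)

lemma TV_eq_sum_pos_part:
  fixes u v :: "'a \<Rightarrow> real"
  assumes "(\<Sum>x\<in>A. u x) = (\<Sum>x\<in>A. v x)"
  shows "TV A u v = (\<Sum>x\<in>A. max (u x - v x) 0)"
proof -
  have "(\<Sum>x\<in>A. \<bar>u x - v x\<bar>) = (\<Sum>x\<in>A. 2 * max (u x - v x) 0 - (u x - v x))"
    by (intro sum.cong) (auto simp: max_def)
  also have "\<dots> = 2 * (\<Sum>x\<in>A. max (u x - v x) 0)"
    using assms by (simp add: sum_subtractf sum_distrib_left)
  finally show ?thesis
    unfolding TV_def by simp
qed

lemma KL_le_ln_mult_TV:
  assumes "finite Y" "is_dist Y p" "is_dist Y q"
    and ratio: "\<And>y. y \<in> Y \<Longrightarrow> p y \<le> L * q y \<and> q y \<le> L * p y"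
  shows "KL Y p q \<le> ln L * TV Y p q"
proof -
  have p: "\<And>y. y \<in> Y \<Longrightarrow> 0 \<le> p y" "(\<Sum>y\<in>Y. p y) = 1"
    and q: "\<And>y. y \<in> Y \<Longrightarrow> 0 \<le> q y" "(\<Sum>y\<in>Y. q y) = 1"
    using assms(2,3) unfolding is_dist_def by auto
  define \<alpha> where "\<alpha> = L * ln L / (L - 1) - 1"
  define \<beta> where "\<beta> = 1 - ln L / (L - 1)"
  define B where "B y = (p y - q y) + \<alpha> * max (p y - q y) 0 + \<beta> * max (q y - p y) 0" for y
  have "KL Y p q \<le> (\<Sum>y\<in>{y\<in>Y. 0 < p y}. B y)"
    unfolding KL_def
  proof (rule sum_mono)
    fix y assume y: "y \<in> {y\<in>Y. 0 < p y}"
    then have "0 < q y"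
      using ratio[of y] q(1)[of y] by (cases "q y = 0") auto
    with y ratio[of y] show "p y * ln (p y / q y) \<le> B y"
      unfolding B_def \<alpha>_def \<beta>_def by (intro mult_ln_div_le_pos_parts) auto
  qed
  also have "\<dots> = (\<Sum>y\<in>Y. B y)"
  proof (rule sum.mono_neutral_left)
    show "\<forall>y\<in>Y - {y\<in>Y. 0 < p y}. B y = 0"
    proof
      fix y assume "y \<in> Y - {y\<in>Y. 0 < p y}"
      then have "p y = 0" "y \<in> Y"
        using p(1)[of y] by auto
      then have "q y = 0"
        using ratio[of y] q(1)[of y] by auto
      with \<open>p y = 0\<close> show "B y = 0"
        unfolding B_def by simp
    qed
  qed (use assms(1) in auto)
  also have "\<dots> = \<alpha> * (\<Sum>y\<in>Y. max (p y - q y) 0) + \<beta> * (\<Sum>y\<in>Y. max (q y - p y) 0)"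
    unfolding B_def using p(2) q(2) by (simp add: sum.distrib sum_subtractf sum_distrib_left)
  also have "\<dots> = (\<alpha> + \<beta>) * TV Y p q"
  proof -
    have "TV Y p q = (\<Sum>y\<in>Y. max (p y - q y) 0)" "TV Y q p = (\<Sum>y\<in>Y. max (q y - p y) 0)"
      using p(2) q(2) by (simp_all add: TV_eq_sum_pos_part)
    then show ?thesis
      by (simp add: TV_commute[of Y q p] algebra_simps)
  qed
  also have "\<alpha> + \<beta> = ln L"
  proof (cases "L = 1")
    case False
    have "\<alpha> + \<beta> = (L * ln L - ln L) / (L - 1)"
      unfolding \<alpha>_def \<beta>_def by (simp add: diff_divide_distrib)
    also have "L * ln L - ln L = ln L * (L - 1)"
      by (simp add: algebra_simps)
    finally show ?thesis
      using False by simp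
  qed (simp add: \<alpha>_def \<beta>_def)
  finally show ?thesis .
qed

lemma Qset_is_dist: "P \<in> Qset X c \<Longrightarrow> is_dist X P"
  unfolding Qset_def by simp

lemma is_dist_push:
  assumes "is_kernel X Y K" "is_dist X P"
  shows "is_dist Y (push X K P)"
proof -
  have K: "\<And>x y. x \<in> X \<Longrightarrow> y \<in> Y \<Longrightarrow> 0 \<le> K x y" "\<And>x. x \<in> X \<Longrightarrow> (\<Sum>y\<in>Y. K x y) = 1"
    and P: "\<And>x. x \<in> X \<Longrightarrow> 0 \<le> P x" "(\<Sum>x\<in>X. P x) = 1"
    using assms unfolding is_kernel_def is_dist_def by auto
  have "(\<Sum>y\<in>Y. push X K P y) = (\<Sum>x\<in>X. P x * (\<Sum>y\<in>Y. K x y))"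
    unfolding push_def by (subst sum.swap) (simp add: sum_distrib_left mult.commute)
  also have "\<dots> = 1"
    using K(2) P(2) by simp
  finally show ?thesis
    unfolding is_dist_def push_def using K(1) P(1) by (auto intro!: sum_nonneg)
qed

lemma kernel_le_exp_push:
  assumes M: "in_M X Y eps c K" and "finite X" "0 < c"
    and R: "R \<in> Qset X c" and y: "y \<in> Y" and x: "x \<in> X"
  shows "K x y \<le> exp eps * push X K R y"
proof (cases "push X K R y = 0")
  case True
  have "\<forall>z\<in>X. 0 \<le> K z y * R z"
    using M R y \<open>0 < c\<close> unfolding in_M_def is_kernel_def is_dist_def Qset_def
    by (fastforce intro: mult_nonneg_nonneg order.trans[of 0 c])
  then have "K x y * R x = 0"
    using True x \<open>finite X\<close> unfolding push_def by (simp add: sum_nonneg_eq_0_iff)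
  moreover have "0 < R x"
    using R x \<open>0 < c\<close> unfolding Qset_def by fastforce
  ultimately show ?thesis
    using True by simp
next
  case False
  then have pos: "0 < push X K R y"
    using is_dist_push[OF _ Qset_is_dist[OF R]] M y unfolding in_M_def is_dist_def
    by (metis order_le_less)
  define m where "m = (MAX z\<in>X. K z y)"
  have "K x y \<le> m"
    unfolding m_def using \<open>finite X\<close> x by (intro Max_ge) auto
  have "ln (m / push X K R y) \<le> eps"
    using M R y pos unfolding in_M_def pml_def m_def by auto
  have "m / push X K R y \<le> exp (ln (m / push X K R y))"
    by (cases "0 < m / push X K R y") (auto intro: order.trans[OF _ less_imp_le[OF exp_gt_zero]])
  also have "\<dots> \<le> exp eps"
    using \<open>ln (m / push X K R y) \<le> eps\<close> by simp
  finally show ?thesis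
    using \<open>K x y \<le> m\<close> pos by (simp add: divide_le_eq mult.commute)
qed

lemma sum_kernel_le_exp_push:
  assumes M: "in_M X Y eps c K" and "finite X" "0 < c"
    and R: "R \<in> Qset X c" and E: "E \<subseteq> Y" and x: "x \<in> X"
  shows "(\<Sum>y\<in>E. K x y) \<le> exp eps * (\<Sum>z\<in>X. R z * (\<Sum>y\<in>E. K z y))"
proof -
  have "(\<Sum>y\<in>E. K x y) \<le> (\<Sum>y\<in>E. exp eps * push X K R y)"
    using kernel_le_exp_push[OF M \<open>finite X\<close> \<open>0 < c\<close> R _ x] E by (intro sum_mono) auto
  also have "\<dots> = exp eps * (\<Sum>y\<in>E. \<Sum>z\<in>X. K z y * R z)"
    unfolding push_def by (simp add: sum_distrib_left)
  also have "(\<Sum>y\<in>E. \<Sum>z\<in>X. K z y * R z) = (\<Sum>z\<in>X. R z * (\<Sum>y\<in>E. K z y))"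
    by (subst sum.swap) (simp add: sum_distrib_left mult.commute)
  finally show ?thesis .
qed

lemma push_le_mult_push:
  assumes M: "in_M X Y eps c K" and "finite X" "0 < c"
    and P: "P \<in> Qset X c" and Q: "Q \<in> Qset X c" and y: "y \<in> Y"
  shows "push X K P y \<le> ((1 - real (card X) * c) * exp eps + 1) * push X K Q y"
proof -
  have K: "\<And>x. x \<in> X \<Longrightarrow> 0 \<le> K x y"
    using M y unfolding in_M_def is_kernel_def is_dist_def by auto
  have "push X K P y = (\<Sum>x\<in>X. K x y * (P x - c)) + (\<Sum>x\<in>X. K x y * c)"
    unfolding push_def by (simp add: sum.distrib[symmetric] algebra_simps)
  also have "(\<Sum>x\<in>X. K x y * (P x - c)) \<le> (\<Sum>x\<in>X. exp eps * push X K Q y * (P x - c))"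
    using kernel_le_exp_push[OF M \<open>finite X\<close> \<open>0 < c\<close> Q y] P unfolding Qset_def
    by (intro sum_mono mult_right_mono) auto
  also have "\<dots> = (1 - real (card X) * c) * exp eps * push X K Q y"
    using P unfolding Qset_def is_dist_def by (simp add: sum_distrib_left[symmetric] sum_subtractf)
  also have "(\<Sum>x\<in>X. K x y * c) \<le> push X K Q y"
    unfolding push_def using K Q unfolding Qset_def by (intro sum_mono mult_left_mono) auto
  finally show ?thesis
    by (simp add: algebra_simps)
qed

definition vertex_dist :: "'a set \<Rightarrow> real \<Rightarrow> 'a \<Rightarrow> 'a \<Rightarrow> real" where
  "vertex_dist X c x z = c + (if z = x then 1 - real (card X) * c else 0)"

lemma vertex_dist_in_Qset:
  assumes "finite X" "0 \<le> c" "real (card X) * c \<le> 1" "x \<in> X"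
  shows "vertex_dist X c x \<in> Qset X c"
  using assms unfolding vertex_dist_def Qset_def is_dist_def by (auto simp: sum.distrib)

lemma sum_vertex_dist_mult:
  assumes "finite X" "x \<in> X"
  shows "(\<Sum>z\<in>X. vertex_dist X c x z * h z) = c * (\<Sum>z\<in>X. h z) + (1 - real (card X) * c) * h x"
proof -
  have "(\<Sum>z\<in>X. vertex_dist X c x z * h z)
      = (\<Sum>z\<in>X. c * h z + (if z = x then (1 - real (card X) * c) * h z else 0))"
    unfolding vertex_dist_def by (intro sum.cong) (auto simp: algebra_simps)
  then show ?thesis
    using assms by (simp add: sum.distrib sum_distrib_left)
qed

lemma sum_kernel_diff_mult_le:
  assumes M: "in_M X Y eps c K" and fX: "finite X" and c: "0 < c"
    and cN: "real (card X) * c \<le> 1" and E: "E \<subseteq> Y" and x: "x \<in> X" and x': "x' \<in> X"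
  shows "((\<Sum>y\<in>E. K x y) - (\<Sum>y\<in>E. K x' y)) * ((1 - real (card X) * c) * exp eps + 1)
           \<le> exp eps - 1"
proof -
  define f where "f z = (\<Sum>y\<in>E. K z y)" for z
  define a where "a = 1 - real (card X) * c"
  define F where "F = (\<Sum>z\<in>X. f z)"
  have compl: "(\<Sum>y\<in>Y - E. K z y) = 1 - f z" if "z \<in> X" for z
    using M E that unfolding in_M_def is_kernel_def is_dist_def f_def by (simp add: sum_diff)
  have "f x \<le> exp eps * (\<Sum>z\<in>X. vertex_dist X c x' z * f z)"
    unfolding f_def
    using sum_kernel_le_exp_push[OF M fX c vertex_dist_in_Qset[OF fX _ cN x'] E x] c by simp
  also have "\<dots> = exp eps * (c * F + a * f x')"
    unfolding F_def a_def using sum_vertex_dist_mult[OF fX x'] by simp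
  finally have E_bound: "f x \<le> exp eps * (c * F + a * f x')" .
  have "1 - f x' \<le> exp eps * (\<Sum>z\<in>X. vertex_dist X c x z * (\<Sum>y\<in>Y - E. K z y))"
    using sum_kernel_le_exp_push[OF M fX c vertex_dist_in_Qset[OF fX _ cN x] Diff_subset[of Y E] x'] c
    by (simp add: compl[OF x'])
  also have "\<dots> = exp eps * (\<Sum>z\<in>X. vertex_dist X c x z * (1 - f z))"
    using compl by simp
  also have "\<dots> = exp eps * (c * (real (card X) - F) + a * (1 - f x))"
    unfolding F_def a_def using sum_vertex_dist_mult[OF fX x] by (simp add: sum_subtractf)
  finally have compl_bound: "1 - f x' \<le> exp eps * (c * (real (card X) - F) + a * (1 - f x))" .
  \<comment> \<open>Adding the two bounds cancels the unknown total mass \<open>F\<close>.\<close>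
  have "exp eps * (c * F + a * f x') + exp eps * (c * (real (card X) - F) + a * (1 - f x))
      = exp eps - exp eps * a * (f x - f x')"
    unfolding a_def by (simp add: algebra_simps)
  then have "(f x - f x') * (a * exp eps + 1) \<le> exp eps - 1"
    using E_bound compl_bound by (simp add: algebra_simps)
  then show ?thesis
    unfolding f_def a_def .
qed

lemma sum_kernel_diff_le_Xi:
  assumes M: "in_M X Y eps c K" and "finite X" "0 < c"
    and cN: "real (card X) * c \<le> 1" and E: "E \<subseteq> Y" and x: "x \<in> X" and x': "x' \<in> X"
  shows "(\<Sum>y\<in>E. K x y) - (\<Sum>y\<in>E. K x' y) \<le> Xi (card X) eps c"
proof -
  have K: "finite Y" "\<And>z y. z \<in> X \<Longrightarrow> y \<in> Y \<Longrightarrow> 0 \<le> K z y" "(\<Sum>y\<in>Y. K x y) = 1"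
    using M x unfolding in_M_def is_kernel_def is_dist_def by auto
  have L: "0 < exp eps * (1 - real (card X) * c) + 1"
    using cN by (simp add: add_nonneg_pos)
  have "(\<Sum>y\<in>E. K x y) - (\<Sum>y\<in>E. K x' y) \<le> (exp eps - 1) / (exp eps * (1 - real (card X) * c) + 1)"
    using sum_kernel_diff_mult_le[OF assms] L by (simp add: le_divide_eq mult.commute)
  moreover have "(\<Sum>y\<in>E. K x y) \<le> (\<Sum>y\<in>Y. K x y)"
    using K E x by (intro sum_mono2) auto
  moreover have "0 \<le> (\<Sum>y\<in>E. K x' y)"
    using K E x' by (intro sum_nonneg) auto
  ultimately show ?thesis
    unfolding Xi_def using K(3) by simp
qed

lemma Xi_nonneg:
  assumes "0 \<le> eps" "real N * c \<le> 1"
  shows "0 \<le> Xi N eps c"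
  using assms unfolding Xi_def by (auto intro!: divide_nonneg_pos add_nonneg_pos)

lemma TV_push_le:
  assumes "finite X" "is_kernel X Y K" and P: "is_dist X P" and Q: "is_dist X Q"
    and osc: "\<And>E x x'. E \<subseteq> Y \<Longrightarrow> x \<in> X \<Longrightarrow> x' \<in> X \<Longrightarrow>
                (\<Sum>y\<in>E. K x y) - (\<Sum>y\<in>E. K x' y) \<le> W"
  shows "TV Y (push X K P) (push X K Q) \<le> W * TV X P Q"
proof -
  define p where "p = push X K P"
  define q where "q = push X K Q"
  define E where "E = {y\<in>Y. q y < p y}"
  define f where "f x = (\<Sum>y\<in>E. K x y)" for x
  have sum_PQ: "(\<Sum>x\<in>X. P x) = 1" "(\<Sum>x\<in>X. Q x) = 1"
    using P Q unfolding is_dist_def by auto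
  then have "X \<noteq> {}"
    by auto
  then obtain x0 where x0: "x0 \<in> X" "Min (f ` X) = f x0"
    using obtains_MIN[OF \<open>finite X\<close>] by metis
  have f_min: "f x0 \<le> f x" if "x \<in> X" for x
    using x0 \<open>finite X\<close> that by (metis Min_le finite_imageI image_eqI)
  have "(\<Sum>y\<in>Y. p y) = (\<Sum>y\<in>Y. q y)"
    using is_dist_push[OF \<open>is_kernel X Y K\<close> P] is_dist_push[OF \<open>is_kernel X Y K\<close> Q]
    unfolding p_def q_def is_dist_def by simp
  then have "TV Y p q = (\<Sum>y\<in>Y. max (p y - q y) 0)"
    by (rule TV_eq_sum_pos_part)
  also have "\<dots> = (\<Sum>y\<in>E. p y - q y)"
    unfolding E_def using \<open>is_kernel X Y K\<close> unfolding is_kernel_def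
    by (simp add: sum.inter_filter) (intro sum.cong refl; auto simp: max_def)
  also have "\<dots> = (\<Sum>x\<in>X. (P x - Q x) * f x)"
    unfolding p_def q_def push_def f_def
    by (simp add: sum_subtractf[symmetric] algebra_simps sum_distrib_left sum_distrib_right)
       (subst sum.swap, simp add: mult_ac)
  also have "\<dots> = (\<Sum>x\<in>X. (P x - Q x) * (f x - f x0))"
  proof -
    have "(\<Sum>x\<in>X. (P x - Q x) * (f x - f x0))
        = (\<Sum>x\<in>X. (P x - Q x) * f x) - f x0 * ((\<Sum>x\<in>X. P x) - (\<Sum>x\<in>X. Q x))"
      by (simp add: algebra_simps sum_subtractf sum_distrib_left sum.distrib)
    then show ?thesis
      using sum_PQ by simp
  qed
  also have "\<dots> \<le> (\<Sum>x\<in>X. max (P x - Q x) 0 * W)"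
  proof (rule sum_mono)
    fix x assume "x \<in> X"
    then have "0 \<le> f x - f x0" "f x - f x0 \<le> W"
      using f_min osc[of E x x0] x0(1) unfolding f_def E_def by auto
    then have "(P x - Q x) * (f x - f x0) \<le> max (P x - Q x) 0 * (f x - f x0)"
      by (intro mult_right_mono) auto
    also have "\<dots> \<le> max (P x - Q x) 0 * W"
      using \<open>f x - f x0 \<le> W\<close> by (intro mult_left_mono) auto
    finally show "(P x - Q x) * (f x - f x0) \<le> max (P x - Q x) 0 * W" .
  qed
  also have "\<dots> = W * TV X P Q"
    using sum_PQ TV_eq_sum_pos_part[where A = X and u = P and v = Q] by (simp add: sum_distrib_left mult.commute)
  finally show ?thesis
    unfolding p_def q_def .
qed

theorem corollary1:
  fixes X :: "'a set" and Y :: "'b set" and K :: "'a \<Rightarrow> 'b \<Rightarrow> real"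
    and c eps \<delta> :: real and N :: nat and P Q :: "'a \<Rightarrow> real"
  assumes "finite X" and "N = card X" and "N \<ge> 2"
    and "0 < c" and "c \<le> 1 / real N" and "eps \<ge> 0"
    and "in_M X Y eps c K"
    and "P \<in> Qset X c" and "Q \<in> Qset X c"
    and "TV X P Q \<le> \<delta>"
  shows "KL Y (push X K P) (push X K Q)
           \<le> Xi N eps c * ln ((1 - real N * c) * exp eps + 1) * \<delta>"
proof -
  note M = \<open>in_M X Y eps c K\<close> and fX = \<open>finite X\<close> and c = \<open>0 < c\<close>
  have cN: "real (card X) * c \<le> 1"
    using assms(2,3,5) by (simp add: le_divide_eq mult.commute)
  have K: "is_kernel X Y K"
    using M unfolding in_M_def by simp
  define L where "L = (1 - real N * c) * exp eps + 1"
  have "KL Y (push X K P) (push X K Q) \<le> ln L * TV Y (push X K P) (push X K Q)"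
    using K push_le_mult_push[OF M fX c] assms(8,9) unfolding L_def assms(2)
    by (intro KL_le_ln_mult_TV is_dist_push Qset_is_dist) (auto simp: is_kernel_def)
  also have "\<dots> \<le> ln L * (Xi N eps c * TV X P Q)"
    using K sum_kernel_diff_le_Xi[OF M fX c cN] cN assms(8,9) unfolding L_def assms(2)
    by (intro mult_left_mono TV_push_le Qset_is_dist fX) auto
  also have "\<dots> \<le> ln L * (Xi N eps c * \<delta>)"
    using cN assms(2,6,10) unfolding L_def
    by (intro mult_left_mono Xi_nonneg) auto
  finally show ?thesis
    unfolding L_def by (simp add: mult_ac)
qed

end
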